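(* For every triple of integers $0\le i<j<k$, the following seven elements of $\mathcal S$ belong to $\mathcal I$ (writing $\pi_{(a|b)}$ for hooks and $\pi_{(a_1,a_2|b_1,b_2)}$, $\pi_{(a_1,a_2,a_3|b_1,b_2,b_3)}$ for partitions of Frobenius rank 2, 3, and $\pi_{(\emptyset|\emptyset)}=\pi_\emptyset$): $\kappa_1=\pi_{\emptyset}(\pi_{(i|i)}\pi_{(k,j|k,j)}+\pi_{(j|k)}\pi_{(k,i|j,i)})-\pi_{(i|i)}\pi_{(j|j)}\pi_{(k|k)}+\pi_{(i|j)}\pi_{(j|k)}\pi_{(k|i)}$; $\kappa_2=\pi_{\emptyset}(\pi_{(j|j)}\pi_{(k,i|k,i)}-\pi_{(k|i)}\pi_{(j,i|k,j)})-\pi_{(i|i)}\pi_{(j|j)}\pi_{(k|k)}+\pi_{(i|j)}\pi_{(j|k)}\pi_{(k|i)}$; $\kappa_3=\pi_{\emptyset}(\pi_{(k|k)}\pi_{(j,i|j,i)}+\pi_{(i|j)}\pi_{(k,j|k,i)})-\pi_{(i|i)}\pi_{(j|j)}\pi_{(k|k)}+\pi_{(i|j)}\pi_{(j|k)}\pi_{(k|i)}$; $\kappa_1^T=\pi_{\emptyset}(\pi_{(i|i)}\pi_{(k,j|k,j)}+\pi_{(k|j)}\pi_{(j,i|k,i)})-\pi_{(i|i)}\pi_{(j|j)}\pi_{(k|k)}+\pi_{(j|i)}\pi_{(k|j)}\pi_{(i|k)}$; $\kappa_2^T=\pi_{\emptyset}(\pi_{(j|j)}\pi_{(k,i|k,i)}-\pi_{(i|k)}\pi_{(k,j|j,i)})-\pi_{(i|i)}\pi_{(j|j)}\pi_{(k|k)}+\pi_{(j|i)}\pi_{(k|j)}\pi_{(i|k)}$;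 $\kappa_3^T=\pi_{\emptyset}(\pi_{(k|k)}\pi_{(j,i|j,i)}+\pi_{(j|i)}\pi_{(k,i|k,j)})-\pi_{(i|i)}\pi_{(j|j)}\pi_{(k|k)}+\pi_{(j|i)}\pi_{(k|j)}\pi_{(i|k)}$; and, with $X:=\pi_{(i|j)}\pi_{(j|k)}\pi_{(k|i)}$, $\kappa_0=\pi_{\emptyset}^2\pi_{(k,j,i|k,j,i)}X-X^2+X\big(2\pi_{(i|i)}\pi_{(j|j)}\pi_{(k|k)}-\pi_{\emptyset}(\pi_{(i|i)}\pi_{(k,j|k,j)}+\pi_{(j|j)}\pi_{(k,i|k,i)}+\pi_{(k|k)}\pi_{(j,i|j,i)})\big)-(\pi_{(i|i)}\pi_{(j|j)}-\pi_{\emptyset}\pi_{(j,i|j,i)})(\pi_{(i|i)}\pi_{(k|k)}-\pi_{\emptyset}\pi_{(k,i|k,i)})(\pi_{(j|j)}\pi_{(k|k)}-\pi_{\emptyset}\pi_{(k,j|k,j)})$.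
   Context: Partitions and Frobenius notation: a partition $\lambda$ of Frobenius rank $r$ is written $\lambda=(a_1,\dots,a_r\mid b_1,\dots,b_r)$ with $a_1>\dots>a_r\ge 0$, $b_1>\dots>b_r\ge 0$, $a_i=\lambda_i-i$, $b_i=\lambda'_i-i$ ($\lambda'$ the conjugate partition); $\emptyset$ denotes the empty partition (rank $0$). Let $\mathcal S=\mathbb C[\pi_\lambda]$ be the polynomial ring in countably many indeterminates $\pi_\lambda$ indexed by all partitions $\lambda$. Plücker relations: for integers $0<k<N$ and a $k$-tuple $L=(L_1,\dots,L_k)$ of integers in $\{-k,\dots,N-k-1\}$ set $\tilde\pi_L:=\mathrm{sgn}(L)\,\pi_{\lambda(L)}$, where $\mathrm{sgn}(L)$ is the sign of the permutation sorting $L$ into increasing order ($\mathrm{sgn}(L):=0$ if $L$ has a repeated entry) and, if $L'_1<\dots<L'_k$ is the increasing rearrangement of $L$, $\lambda(L)$ is the partition with parts $\lambda_i=L'_{k-i+1}+i$, $i=1,\dots,k$. For a $(k-1)$-tuple $I$ and a $(k+1)$-tuple $J$ with entries in $\{-k,\dots,N-k-1\}$ the Plücker quadratic form is $p_{I,J}:=\sum_{j=1}^{k+1}(-1)^j\tilde\pi_{I_1,\dots,I_{k-1},J_j}\,\tilde\pi_{J_1,\dots,\widehat{J_j},\dots,J_{k+1}}\in\mathcal S$ (hat = omission). $\mathcal I\subset\mathcal S$ is the ideal generated by all $p_{I,J}$ for all $0<k<N$ and all such $I,J$. *)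

theory Defs
  imports Complex_Main "HOL-Library.Poly_Mapping"
begin

(* Partitions: nonincreasing lists of positive integers; lambda_i = xs ! (i-1). *)
typedef partition = "{xs :: nat list. sorted_wrt (\<ge>) xs \<and> (\<forall>x\<in>set xs. 0 < x)}"
  by (rule exI[of _ "[]"]) simp

definition conj_list :: "nat list \<Rightarrow> nat list" where
  "conj_list xs = (if xs = [] then [] else
     map (\<lambda>j. length (filter (\<lambda>p. j \<le> p) xs)) [1..<hd xs + 1])"

definition frob_rank :: "nat list \<Rightarrow> nat" where
  "frob_rank xs = length (filter (\<lambda>i. i + 1 \<le> xs ! i) [0..<length xs])"

definition frob_a :: "nat list \<Rightarrow> nat list" where
  "frob_a xs = map (\<lambda>i. xs ! i - (i + 1)) [0..<frob_rank xs]"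

definition frob_b :: "nat list \<Rightarrow> nat list" where
  "frob_b xs = map (\<lambda>i. conj_list xs ! i - (i + 1)) [0..<frob_rank xs]"

definition frob :: "nat list \<Rightarrow> nat list \<Rightarrow> partition" where
  "frob a b = (THE p. frob_a (Rep_partition p) = a \<and> frob_b (Rep_partition p) = b)"

type_synonym S = "(partition \<Rightarrow>\<^sub>0 nat) \<Rightarrow>\<^sub>0 complex"

definition pvar :: "partition \<Rightarrow> S" where
  "pvar p = Poly_Mapping.single (Poly_Mapping.single p 1) 1"

definition sgn_tuple :: "int list \<Rightarrow> int" where
  "sgn_tuple L = (if distinct L then
      (-1) ^ card {(a, b). a < b \<and> b < length L \<and> L ! b < L ! a} else 0)"

definition lam_tuple :: "int list \<Rightarrow> partition" where
  "lam_tuple L = Abs_partition (filter (\<lambda>x. 0 < x)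
     (map (\<lambda>i. nat (sort L ! (length L - i) + int i)) [1..<length L + 1]))"

definition tpi :: "int list \<Rightarrow> S" where
  "tpi L = of_int (sgn_tuple L) * pvar (lam_tuple L)"

definition pluecker :: "int list \<Rightarrow> int list \<Rightarrow> S" where
  "pluecker I J = (\<Sum>j = 1..length J.
      (-1) ^ j * tpi (I @ [J ! (j - 1)]) * tpi (take (j - 1) J @ drop j J))"

definition pluecker_gens :: "S set" where
  "pluecker_gens = {pluecker I J | I J k N. 0 < k \<and> k < N \<and>
      length I = k - 1 \<and> length J = k + 1 \<and>
      set I \<subseteq> {- int k .. int N - int k - 1} \<and> set J \<subseteq> {- int k .. int N - int k - 1}}"

inductive_set ideal_gen :: "'a::comm_ring_1 set \<Rightarrow> 'a set" for G where
  zero: "0 \<in> ideal_gen G"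
| gen: "g \<in> G \<Longrightarrow> g \<in> ideal_gen G"
| add: "a \<in> ideal_gen G \<Longrightarrow> b \<in> ideal_gen G \<Longrightarrow> a + b \<in> ideal_gen G"
| mult: "a \<in> ideal_gen G \<Longrightarrow> r * a \<in> ideal_gen G"

definition plueckerIdeal :: "S set" where
  "plueckerIdeal = ideal_gen pluecker_gens"

abbreviation P :: "nat list \<Rightarrow> nat list \<Rightarrow> S" where
  "P a b \<equiv> pvar (frob a b)"

end

theory Submission
  imports Defs
begin

(* Encode a partition by its Maya set (see maya_set). The Pluecker form p_{I,J} built from the Maya
   sets S_I of (a_1, ..., a_(r-1) | b_1, ..., b_r) and S_J = [-m, -1] + {a_r} has one term for each
   element of S_J - S_I = {-b_1 - 1, ..., -b_r - 1, a_r}, and up to sign it is the rank-r expansion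
     pi_0 pi_(a|b) + sum_l (-1)^(l+r+1) pi_(a_1..a_(r-1) | b without b_l) pi_(a_r | b_l).
   For r = 2 and r = 3 these are Giambelli-type quadratic relations, and each kappa is an explicit
   polynomial combination of them. *)

lemma nat_eq_if_less_iff: "(\<And>c::nat. c < x \<longleftrightarrow> c < y) \<Longrightarrow> x = y"
  by (metis less_irrefl linorder_neqE_nat)

lemma downward_closed_eq_lessThan:
  fixes P :: "nat \<Rightarrow> bool"
  assumes "\<And>r r'. P r \<Longrightarrow> r' \<le> r \<Longrightarrow> P r'" "\<not> P N"
  shows "\<exists>n. \<forall>r. P r \<longleftrightarrow> r < n"
proof -
  define n where "n = (LEAST r. \<not> P r)"
  have "\<not> P n" unfolding n_def by (rule LeastI[of _ N]) (rule assms(2))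
  have "P r" if "r < n" for r using not_less_Least[OF that[unfolded n_def]] by simp
  moreover have "\<not> P r" if "n \<le> r" for r using assms(1) \<open>\<not> P n\<close> that by blast
  ultimately show ?thesis by (metis not_less)
qed

lemma filter_less_upt: "filter (\<lambda>i. i < n) [0..<m] = [0..<min n m]"
  by (induction m) auto

lemma filter_pos_eq_takeWhile:
  "sorted_wrt (\<ge>) (M::nat list) \<Longrightarrow> filter (\<lambda>x. 0 < x) M = takeWhile (\<lambda>x. 0 < x) M"
proof (induction M)
  case (Cons x xs)
  show ?case
  proof (cases "0 < x")
    case False
    hence "\<forall>y\<in>set xs. y = 0" using Cons.prems by auto
    hence "filter (\<lambda>x. 0 < x) xs = []" by (simp add: filter_empty_conv)
    thus ?thesis using False by simp
  qed (use Cons in simp)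
qed simp

lemma sorted_decreasing_distinct: "sorted_wrt (>) (a::nat list) \<Longrightarrow> distinct a"
proof -
  assume "sorted_wrt (>) a"
  hence "sorted_wrt (<) (rev a)" by (simp add: sorted_wrt_rev)
  thus ?thesis by (simp add: strict_sorted_iff)
qed

lemma sorted_decreasing_butlast:
  assumes "sorted_wrt (>) (a::nat list)" and "a \<noteq> []"
  shows "sorted_wrt (>) (butlast a)" and "\<forall>y\<in>set (butlast a). last a < y"
    and "set a = insert (last a) (set (butlast a))"
proof -
  have a: "a = butlast a @ [last a]" using assms(2) by simp
  show "sorted_wrt (>) (butlast a)" "\<forall>y\<in>set (butlast a). last a < y"
    using assms(1) by (subst (asm) a, simp add: sorted_wrt_append)+
  show "set a = insert (last a) (set (butlast a))" by (subst a) auto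
qed

lemma distinct_length_le_bound: "distinct xs \<Longrightarrow> \<forall>y\<in>set xs. y < (m::nat) \<Longrightarrow> length xs \<le> m"
  by (metis card_lessThan card_mono distinct_card finite_lessThan lessThan_iff subsetI)

lemma sorted_decreasing_gap:
  assumes "sorted_wrt (>) (a::nat list)" "c \<le> r" "r < length a"
  shows "a!r + (r - c) \<le> a!c"
  using assms(2,3)
proof (induction r)
  case 0 thus ?case by simp
next
  case (Suc r)
  show ?case
  proof (cases "c = Suc r")
    case True thus ?thesis by simp
  next
    case False
    hence "c \<le> r" using Suc by simp
    have "a!(Suc r) < a!r" using assms(1) Suc.prems by (simp add: sorted_wrt_iff_nth_less)
    thus ?thesis using Suc.IH[OF \<open>c \<le> r\<close>] Suc.prems \<open>c \<le> r\<close> by simp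
  qed
qed

lemma sorted_increasing_gap:
  assumes "sorted_wrt (<) (s::int list)" "p \<le> q" "q < length s"
  shows "s!p + int (q - p) \<le> s!q"
  using assms(2,3)
proof (induction q)
  case 0 thus ?case by simp
next
  case (Suc q)
  show ?case
  proof (cases "p = Suc q")
    case True thus ?thesis by simp
  next
    case False
    hence "p \<le> q" using Suc by simp
    have "s!q < s!(Suc q)" using assms(1) Suc.prems by (simp add: sorted_wrt_iff_nth_less)
    thus ?thesis using Suc.IH[OF \<open>p \<le> q\<close>] Suc.prems \<open>p \<le> q\<close> by (simp add: Suc_diff_le)
  qed
qed

lemma card_ge_sorted_iff:
  assumes s: "sorted_wrt (<) (s::int list)" and r: "r < length s"
  shows "t \<le> s!(length s - 1 - r) \<longleftrightarrow> r + 1 \<le> card {x\<in>set s. t \<le> x}"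
proof -
  let ?n = "length s" let ?p = "length s - 1 - r" let ?Q = "{q. q < ?n \<and> t \<le> s!q}"
  have mono: "s!i \<le> s!j" if "i \<le> j" "j < ?n" for i j
    using sorted_nth_mono[OF strict_sorted_imp_sorted[OF s] that] .
  have card_Q: "card {x\<in>set s. t \<le> x} = card ?Q"
  proof -
    have "{x\<in>set s. t \<le> x} = (!) s ` ?Q" by (auto simp: in_set_conv_nth)
    moreover have "inj_on ((!) s) ?Q" using s by (auto simp: inj_on_def nth_eq_iff_index_eq strict_sorted_iff)
    ultimately show ?thesis by (simp add: card_image)
  qed
  show ?thesis
  proof (cases "t \<le> s!?p")
    case True
    hence "{?p..<?n} \<subseteq> ?Q" using mono by (auto intro: order_trans)
    hence "card {?p..<?n} \<le> card ?Q" by (intro card_mono) auto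
    thus ?thesis using True r card_Q by simp
  next
    case False
    have "?Q \<subseteq> {?p+1..<?n}"
    proof
      fix q assume q: "q \<in> ?Q"
      have "\<not> q \<le> ?p"
      proof
        assume "q \<le> ?p"
        hence "s!q \<le> s!?p" using mono r by simp
        thus False using q False by simp
      qed
      thus "q \<in> {?p+1..<?n}" using q by simp
    qed
    hence "card ?Q \<le> card {?p+1..<?n}" by (intro card_mono) auto
    thus ?thesis using False r card_Q by simp
  qed
qed

lemma card_ge_sorted_decreasing_iff:
  assumes a: "sorted_wrt (>) (a::nat list)"
  shows "r + 1 \<le> card {y\<in>set a. u \<le> y} \<longleftrightarrow> r < length a \<and> u \<le> a!r"
proof (cases "r < length a")
  case True
  define s where "s = rev (map int a)"
  have ss: "sorted_wrt (<) s" unfolding s_def using a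
    by (simp add: sorted_wrt_rev sorted_wrt_map)
  have ls: "length s = length a" unfolding s_def by simp
  have sn: "s!(length s - 1 - r) = int (a!r)" unfolding s_def using True by (simp add: rev_nth)
  have "{x\<in>set s. int u \<le> x} = int ` {y\<in>set a. u \<le> y}" unfolding s_def by auto
  hence "card {x\<in>set s. int u \<le> x} = card {y\<in>set a. u \<le> y}" by (simp add: card_image)
  thus ?thesis using card_ge_sorted_iff[OF ss, of r "int u"] True ls sn by simp
next
  case False
  have "card {y\<in>set a. u \<le> y} \<le> card (set a)" by (rule card_mono) auto
  also have "\<dots> \<le> length a" by (rule card_length)
  finally show ?thesis using False by simp
qed

lemma card_less_sorted:
  assumes s: "sorted_wrt (<) (J::int list)" and p: "p < length J"
  shows "card {y\<in>set J. y < J!p} = p"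
proof -
  have d: "distinct J" using s by (simp add: strict_sorted_iff)
  have "{y\<in>set J. y < J!p} = (\<lambda>q. J!q) ` {..<p}"
  proof (rule set_eqI, rule iffI)
    fix y assume "y \<in> {y\<in>set J. y < J!p}"
    then obtain q where q: "q < length J" "y = J!q" "J!q < J!p" by (auto simp: in_set_conv_nth)
    have "q < p"
    proof (rule ccontr)
      assume "\<not> q < p"
      hence "p = q \<or> p < q" by auto
      thus False using q s p by (auto simp: sorted_wrt_iff_nth_less dest: less_asym)
    qed
    thus "y \<in> (\<lambda>q. J!q) ` {..<p}" using q by auto
  next
    fix y assume "y \<in> (\<lambda>q. J!q) ` {..<p}"
    then obtain q where "q < p" "y = J!q" by auto
    thus "y \<in> {y\<in>set J. y < J!p}" using s p by (auto simp: sorted_wrt_iff_nth_less)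
  qed
  moreover have "inj_on (\<lambda>q. J!q) {..<p}" using d p by (auto simp: inj_on_def nth_eq_iff_index_eq)
  ultimately show ?thesis by (simp add: card_image)
qed

lemma set_delete_nth:
  assumes "distinct xs" "p < length xs"
  shows "set (take p xs @ drop (Suc p) xs) = set xs - {xs!p}"
proof -
  have xs: "xs = take p xs @ xs!p # drop (Suc p) xs" using assms(2) by (simp add: id_take_nth_drop)
  show ?thesis using assms(1) by (subst (2) xs, subst (asm) xs) auto
qed

lemma sorted_wrt_delete_nth:
  assumes "sorted_wrt R xs" and "p < length xs"
  shows "sorted_wrt R (take p xs @ drop (Suc p) xs)"
proof -
  have xs: "xs = take p xs @ xs!p # drop (Suc p) xs" using assms(2) by (simp add: id_take_nth_drop)
  show ?thesis using assms(1) by (subst (asm) xs) (auto simp: sorted_wrt_append)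
qed

lemma image_nth_lessThan: "(\<lambda>p. xs!p) ` {..<length xs} = set xs"
  by (auto simp: in_set_conv_nth)

section \<open>Young diagrams and Frobenius coordinates\<close>

definition young_diagram :: "nat list \<Rightarrow> (nat \<times> nat) set" where
  "young_diagram xs = {(r,c). r < length xs \<and> c < xs!r}"

(* Cells are 0-indexed (row, column). The diagonal cell (r, r) carries the arm a_r to its right
   and the leg b_r below it. *)
definition frobenius_diagram :: "nat list \<Rightarrow> nat list \<Rightarrow> (nat \<times> nat) set" where
  "frobenius_diagram a b =
     {(r,c). (r \<le> c \<and> r < length a \<and> c - r \<le> a!r) \<or> (c < r \<and> c < length b \<and> r - c \<le> b!c)}"

definition is_partition :: "nat list \<Rightarrow> bool" where
  "is_partition xs = (sorted_wrt (\<ge>) xs \<and> (\<forall>x\<in>set xs. 0<x))"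

lemma mem_young_diagram: "(r,c) \<in> young_diagram xs \<longleftrightarrow> r < length xs \<and> c < xs!r"
  by (simp add: young_diagram_def)

lemma mem_frobenius_diagram:
  "(r,c) \<in> frobenius_diagram a b \<longleftrightarrow>
     (r \<le> c \<and> r < length a \<and> c - r \<le> a!r) \<or> (c < r \<and> c < length b \<and> r - c \<le> b!c)"
  by (simp add: frobenius_diagram_def)

lemma young_diagram_inj:
  assumes "\<forall>x\<in>set xs. 0<x" "\<forall>x\<in>set ys. 0<x" "young_diagram xs = young_diagram ys"
  shows "xs = ys"
proof -
  have m: "(r,c) \<in> young_diagram xs \<longleftrightarrow> (r,c) \<in> young_diagram ys" for r c using assms(3) by simp
  have len: "r < length xs \<longleftrightarrow> r < length ys" for r
  proof -
    have "r < length xs \<longleftrightarrow> (r,0) \<in> young_diagram xs"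
      using assms(1) nth_mem[of r xs] by (auto simp: young_diagram_def)
    moreover have "r < length ys \<longleftrightarrow> (r,0) \<in> young_diagram ys"
      using assms(2) nth_mem[of r ys] by (auto simp: young_diagram_def)
    ultimately show ?thesis using m by blast
  qed
  hence L: "length xs = length ys" by (rule nat_eq_if_less_iff)
  show ?thesis
  proof (rule nth_equalityI[OF L])
    fix r assume r: "r < length xs"
    show "xs!r = ys!r"
      by (rule nat_eq_if_less_iff) (use m r L in \<open>auto simp: young_diagram_def\<close>)
  qed
qed

lemma young_diagram_filter_pos:
  assumes M: "sorted_wrt (\<ge>) (M::nat list)"
  shows "young_diagram (filter (\<lambda>x. 0 < x) M) = {(r,c). r < length M \<and> c < M!r}"
proof -
  let ?T = "takeWhile (\<lambda>x. 0 < x) M"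
  have "(r,c) \<in> young_diagram ?T \<longleftrightarrow> r < length M \<and> c < M!r" for r c
  proof
    assume "(r,c) \<in> young_diagram ?T"
    hence h: "r < length ?T" "c < ?T ! r" unfolding mem_young_diagram by auto
    have "r < length M" using h(1) length_takeWhile_le[of "\<lambda>x. 0 < x" M] by linarith
    thus "r < length M \<and> c < M!r" using h takeWhile_nth[OF h(1)] by simp
  next
    assume h: "r < length M \<and> c < M!r"
    have "0 < M!i" if "i < Suc r" for i
    proof -
      have "M!r \<le> M!i" using M h that by (metis le_less less_Suc_eq_le sorted_wrt_iff_nth_less)
      thus ?thesis using h by simp
    qed
    hence "Suc r \<le> length ?T" using h by (intro length_takeWhile_less_P_nth) auto
    thus "(r,c) \<in> young_diagram ?T" unfolding mem_young_diagram using takeWhile_nth[of r _ M] h by simp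
  qed
  thus ?thesis unfolding filter_pos_eq_takeWhile[OF M] by auto
qed

lemma is_partition_antimono: "is_partition xs \<Longrightarrow> i \<le> j \<Longrightarrow> j < length xs \<Longrightarrow> xs!j \<le> xs!i"
  unfolding is_partition_def
  by (metis le_less order.refl sorted_wrt_iff_nth_less)

lemma frob_rank_iff:
  assumes "is_partition xs"
  shows "i < frob_rank xs \<longleftrightarrow> (i < length xs \<and> i + 1 \<le> xs!i)"
proof -
  let ?Q = "\<lambda>i. i < length xs \<and> i + 1 \<le> xs!i"
  have "\<exists>n. \<forall>r. ?Q r \<longleftrightarrow> r < n"
  proof (rule downward_closed_eq_lessThan[where N = "length xs"])
    fix r r' assume "?Q r" "r' \<le> r"
    thus "?Q r'" using is_partition_antimono[OF assms, of r' r] by auto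
  qed simp
  then obtain n where n: "\<And>r. ?Q r \<longleftrightarrow> r < n" by blast
  have nl: "n \<le> length xs" using n[of "n - 1"] by (cases n) auto
  have "filter (\<lambda>i. i + 1 \<le> xs!i) [0..<length xs] = filter (\<lambda>i. i < n) [0..<length xs]"
    by (rule filter_cong) (auto simp: n[symmetric])
  also have "\<dots> = [0..<n]" using nl by (simp add: filter_less_upt min_def)
  finally have "frob_rank xs = n" unfolding frob_rank_def by simp
  thus ?thesis using n by simp
qed

lemma conj_list_nth:
  "xs \<noteq> [] \<Longrightarrow> c < hd xs \<Longrightarrow> conj_list xs ! c = length (filter (\<lambda>p. c + 1 \<le> p) xs)"
proof -
  assume ne: "xs \<noteq> []" and h: "c < hd xs"
  have l: "c < length [1..<hd xs + 1]" using h by simp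
  define F where "F j = length (filter (\<lambda>p. j \<le> p) xs)" for j
  have e: "conj_list xs = map F [1..<hd xs + 1]"
    unfolding conj_list_def if_not_P[OF ne] F_def by (rule refl)
  have "conj_list xs ! c = F ([1..<hd xs + 1] ! c)" unfolding e by (rule nth_map[OF l])
  also have "[1..<hd xs + 1] ! c = 1 + c" by (rule nth_upt) (use h in simp)
  finally show ?thesis by (simp add: F_def)
qed

lemma conj_list_iff:
  assumes "is_partition xs" "xs \<noteq> []" "c < hd xs"
  shows "r < conj_list xs ! c \<longleftrightarrow> (r < length xs \<and> c < xs!r)"
proof -
  let ?Q = "\<lambda>r. r < length xs \<and> c < xs!r"
  have "\<exists>n. \<forall>r. ?Q r \<longleftrightarrow> r < n"
  proof (rule downward_closed_eq_lessThan[where N = "length xs"])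
    fix r r' assume "?Q r" "r' \<le> r"
    thus "?Q r'" using is_partition_antimono[OF assms(1), of r' r] by auto
  qed simp
  then obtain n where n: "\<And>r. ?Q r \<longleftrightarrow> r < n" by blast
  have "conj_list xs ! c = length (filter (\<lambda>p. c + 1 \<le> p) xs)"
    by (rule conj_list_nth[OF assms(2,3)])
  also have "\<dots> = card {r. r < length xs \<and> c + 1 \<le> xs!r}"
    by (rule length_filter_conv_card)
  also have "{r. r < length xs \<and> c + 1 \<le> xs!r} = {..<n}"
    using n by (auto simp: Suc_le_eq)
  finally have "conj_list xs ! c = n" by simp
  thus ?thesis using n[of r] by simp
qed

lemma frob_a_nth: "i < frob_rank xs \<Longrightarrow> frob_a xs ! i = xs!i - (i+1)"
  and frob_b_nth: "i < frob_rank xs \<Longrightarrow> frob_b xs ! i = conj_list xs!i - (i+1)"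
  and frob_len: "length (frob_a xs) = frob_rank xs" "length (frob_b xs) = frob_rank xs"
  by (auto simp: frob_a_def frob_b_def)

lemma mem_young_diagram_arm:
  assumes P: "is_partition xs" and rc: "r \<le> c"
  shows "(r,c) \<in> young_diagram xs \<longleftrightarrow> r < length (frob_a xs) \<and> c - r \<le> frob_a xs ! r"
proof (cases "r < frob_rank xs")
  case True
  hence "r < length xs" "r + 1 \<le> xs!r" using frob_rank_iff[OF P] by blast+
  thus ?thesis using True rc by (auto simp: mem_young_diagram frob_len frob_a_nth)
next
  case False
  hence "\<not> (r < length xs \<and> r + 1 \<le> xs!r)" using frob_rank_iff[OF P] by blast
  thus ?thesis using False rc by (auto simp: mem_young_diagram frob_len)
qed

lemma mem_young_diagram_leg:
  assumes P: "is_partition xs" and cr: "c < r"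
  shows "(r,c) \<in> young_diagram xs \<longleftrightarrow> c < length (frob_b xs) \<and> r - c \<le> frob_b xs ! c"
proof (cases "c < frob_rank xs")
  case True
  hence c: "c < length xs" "c + 1 \<le> xs!c" using frob_rank_iff[OF P] by blast+
  have ne: "xs \<noteq> []" using c by auto
  have "xs!c \<le> hd xs" using is_partition_antimono[OF P, of 0 c] c ne by (simp add: hd_conv_nth)
  hence hc: "c < hd xs" using c by linarith
  have "c < conj_list xs ! c" using conj_list_iff[OF P ne hc, of c] c by simp
  thus ?thesis using conj_list_iff[OF P ne hc, of r] True cr
    by (auto simp: mem_young_diagram frob_len frob_b_nth)
next
  case False
  hence nc: "\<not> (c < length xs \<and> c + 1 \<le> xs!c)" using frob_rank_iff[OF P] by blast
  have "\<not> (r < length xs \<and> c < xs!r)"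
  proof
    assume h: "r < length xs \<and> c < xs!r"
    hence "xs!r \<le> xs!c" using is_partition_antimono[OF P, of c r] cr by simp
    thus False using nc h cr by auto
  qed
  thus ?thesis using False cr by (auto simp: mem_young_diagram frob_len)
qed

lemma young_diagram_eq_frobenius_diagram:
  assumes "is_partition xs"
  shows "young_diagram xs = frobenius_diagram (frob_a xs) (frob_b xs)"
proof -
  have "(r,c) \<in> young_diagram xs \<longleftrightarrow> (r,c) \<in> frobenius_diagram (frob_a xs) (frob_b xs)" for r c
    using mem_young_diagram_arm[OF assms, of r c] mem_young_diagram_leg[OF assms, of c r]
    by (cases "r \<le> c") (simp_all add: mem_frobenius_diagram)
  thus ?thesis by (auto simp del: mem_young_diagram mem_frobenius_diagram)
qed

lemma rows_if_young_diagram_eq: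
  assumes P: "is_partition xs" and D: "young_diagram xs = frobenius_diagram a b"
    and sb: "sorted_wrt (>) b" and len: "length a = length b"
  shows "frob_rank xs = length a" and "i < length a \<Longrightarrow> xs!i = a!i + i + 1"
proof -
  have m: "(r < length xs \<and> c < xs!r) \<longleftrightarrow> (r,c) \<in> frobenius_diagram a b" for r c
    using D mem_young_diagram[of r c xs] by simp
  have diag: "(i,i) \<in> frobenius_diagram a b \<longleftrightarrow> i < length a" for i by (auto simp: frobenius_diagram_def)
  show "frob_rank xs = length a"
  proof (rule nat_eq_if_less_iff)
    fix i
    have "i + 1 \<le> xs!i \<longleftrightarrow> i < xs!i" by (simp add: Suc_le_eq)
    thus "i < frob_rank xs \<longleftrightarrow> i < length a" using frob_rank_iff[OF P, of i] m[of i i] diag[of i] by blast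
  qed
  assume i: "i < length a"
  have row: "(i,c) \<in> frobenius_diagram a b \<longleftrightarrow> c < a!i + i + 1" for c
  proof (cases "i \<le> c")
    case True thus ?thesis using i by (auto simp: frobenius_diagram_def)
  next
    case False
    have "b!i + (i - c) \<le> b!c" using sorted_decreasing_gap[OF sb, of c i] i False len by simp
    thus ?thesis using i False len by (auto simp: frobenius_diagram_def)
  qed
  have "i < length xs" using m[of i i] diag[of i] i by simp
  thus "xs!i = a!i + i + 1" by (intro nat_eq_if_less_iff) (use m row in auto)
qed

lemma columns_if_young_diagram_eq:
  assumes P: "is_partition xs" and D: "young_diagram xs = frobenius_diagram a b"
    and sa: "sorted_wrt (>) a" and sb: "sorted_wrt (>) b" and len: "length a = length b"
    and i: "i < length b"
  shows "conj_list xs ! i = b!i + i + 1"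
proof -
  have m: "(r < length xs \<and> c < xs!r) \<longleftrightarrow> (r,c) \<in> frobenius_diagram a b" for r c
    using D mem_young_diagram[of r c xs] by simp
  note rows = rows_if_young_diagram_eq[OF P D sb len]
  have a0: "0 < length a" using i len by linarith
  hence ne: "xs \<noteq> []" using rows(1) frob_rank_iff[OF P, of 0] by auto
  have "a!i + (i - 0) \<le> a!0" using sorted_decreasing_gap[OF sa, of 0 i] i len by simp
  moreover have "hd xs = a!0 + 1" using rows(2)[OF a0] ne by (simp add: hd_conv_nth)
  ultimately have hc: "i < hd xs" by linarith
  have col: "(r,i) \<in> frobenius_diagram a b \<longleftrightarrow> r < b!i + i + 1" for r
  proof (cases "r \<le> i")
    case True
    have "a!i + (i - r) \<le> a!r" using sorted_decreasing_gap[OF sa, of r i] True i len by simp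
    thus ?thesis using True i len by (auto simp: frobenius_diagram_def)
  next
    case False thus ?thesis using i by (auto simp: frobenius_diagram_def)
  qed
  show ?thesis by (rule nat_eq_if_less_iff) (simp add: conj_list_iff[OF P ne hc] m col)
qed

lemma frob_coords_if_young_diagram_eq:
  assumes P: "is_partition xs" and D: "young_diagram xs = frobenius_diagram a b"
    and sa: "sorted_wrt (>) a" and sb: "sorted_wrt (>) b" and len: "length a = length b"
  shows "frob_a xs = a \<and> frob_b xs = b"
proof
  note rows = rows_if_young_diagram_eq[OF P D sb len]
  show "frob_a xs = a" by (rule nth_equalityI) (simp_all add: frob_len frob_a_nth rows)
  show "frob_b xs = b" using columns_if_young_diagram_eq[OF assms] len
    by (intro nth_equalityI) (simp_all add: frob_len frob_b_nth rows)
qed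

lemma frob_eq_Abs_partition:
  assumes P: "is_partition xs" and D: "young_diagram xs = frobenius_diagram a b"
    and sa: "sorted_wrt (>) a" and sb: "sorted_wrt (>) b" and len: "length a = length b"
  shows "frob a b = Abs_partition xs"
proof -
  have mem: "xs \<in> {xs. sorted_wrt (\<ge>) xs \<and> (\<forall>x\<in>set xs. 0 < x)}" using P by (simp add: is_partition_def)
  have R: "Rep_partition (Abs_partition xs) = xs" by (rule Abs_partition_inverse[OF mem])
  show ?thesis unfolding frob_def
  proof (rule the_equality)
    show "frob_a (Rep_partition (Abs_partition xs)) = a \<and> frob_b (Rep_partition (Abs_partition xs)) = b"
      unfolding R by (rule frob_coords_if_young_diagram_eq[OF P D sa sb len])
  next
    fix p assume h: "frob_a (Rep_partition p) = a \<and> frob_b (Rep_partition p) = b"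
    have Pp: "is_partition (Rep_partition p)" using Rep_partition[of p] by (simp add: is_partition_def)
    have "young_diagram (Rep_partition p) = young_diagram xs"
      using young_diagram_eq_frobenius_diagram[OF Pp] h D by simp
    hence "Rep_partition p = xs" using young_diagram_inj Pp P unfolding is_partition_def by blast
    thus "p = Abs_partition xs" by (metis Rep_partition_inverse)
  qed
qed

section \<open>Maya sets\<close>

definition lam_parts :: "int list \<Rightarrow> nat list" where
  "lam_parts L = map (\<lambda>i. nat (sort L ! (length L - i) + int i)) [1..<length L + 1]"

lemma lam_tuple_eq_lam_parts: "lam_tuple L = Abs_partition (filter (\<lambda>x. 0 < x) (lam_parts L))"
  by (simp add: lam_tuple_def lam_parts_def)

lemma lam_parts_props:
  assumes "distinct L"
  shows "sorted_wrt (\<ge>) (lam_parts L)" and "length (lam_parts L) = length L"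
    and "r < length L \<Longrightarrow> c < lam_parts L ! r \<longleftrightarrow> r + 1 \<le> card {x\<in>set L. int c - int r \<le> x}"
proof -
  define s where "s = sort L"
  define m where "m = length L"
  have ss: "sorted_wrt (<) s" unfolding s_def using assms by (simp add: strict_sorted_iff distinct_sort)
  have ls: "length s = m" unfolding s_def m_def by simp
  show len: "length (lam_parts L) = length L" unfolding lam_parts_def length_map length_upt by simp
  have nth: "lam_parts L ! r = nat (s!(m - 1 - r) + int r + 1)" if "r < m" for r
  proof -
    have l: "r < length [1..<m+1]" using that by simp
    have "lam_parts L ! r = nat (s ! (m - [1..<m+1]!r) + int ([1..<m+1]!r))"
      unfolding lam_parts_def s_def m_def by (rule nth_map[OF l[unfolded m_def]])
    also have "[1..<m+1]!r = 1 + r" by (rule nth_upt) (use that in simp)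
    finally show ?thesis using that m_def by (simp add: algebra_simps)
  qed
  show "sorted_wrt (\<ge>) (lam_parts L)"
  proof (subst sorted_wrt_iff_nth_less, intro allI impI)
    fix r r' assume h: "r < r'" "r' < length (lam_parts L)"
    hence "r < m" "r' < m" using len m_def by auto
    have "s!(m-1-r') + int ((m-1-r) - (m-1-r')) \<le> s!(m-1-r)"
      using sorted_increasing_gap[OF ss, of "m-1-r'" "m-1-r"] h \<open>r' < m\<close> ls by simp
    moreover have "int ((m-1-r) - (m-1-r')) = int r' - int r" using h \<open>r' < m\<close> by simp
    ultimately have "s!(m-1-r') + int r' + 1 \<le> s!(m-1-r) + int r + 1" by linarith
    thus "lam_parts L ! r' \<le> lam_parts L ! r" unfolding nth[OF \<open>r < m\<close>] nth[OF \<open>r' < m\<close>] by (rule nat_mono)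
  qed
  assume r: "r < length L"
  have "c < lam_parts L ! r \<longleftrightarrow> int c - int r \<le> s!(m-1-r)" unfolding nth[OF r[folded m_def]] by linarith
  also have "\<dots> \<longleftrightarrow> r + 1 \<le> card {x\<in>set s. int c - int r \<le> x}"
    using card_ge_sorted_iff[OF ss, of r] r ls m_def by simp
  finally show "c < lam_parts L ! r \<longleftrightarrow> r + 1 \<le> card {x\<in>set L. int c - int r \<le> x}"
    by (simp add: s_def)
qed

(* For m >= length lambda, the set {lambda_i - i | 1 <= i <= m} of lambda = (a | b) consists of the
   a_l together with the integers in [-m, -1] other than the -b_l - 1; lam_tuple inverts this. *)
definition maya_set :: "nat \<Rightarrow> nat list \<Rightarrow> nat list \<Rightarrow> int set" where
  "maya_set m a b = ({-int m..-1} - (\<lambda>y. - int y - 1) ` set b) \<union> int ` set a"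

lemma card_maya_set:
  assumes da: "distinct a" and db: "distinct b" and bm: "\<forall>y\<in>set b. y < m"
  shows "card (maya_set m a b) = m - length b + length a"
proof -
  let ?\<beta> = "\<lambda>y::nat. - int y - 1"
  have sub: "?\<beta> ` set b \<subseteq> {-int m..-1}" using bm by force
  have inj: "inj_on ?\<beta> (set b)" by (auto simp: inj_on_def)
  have "card ({-int m..-1} - ?\<beta> ` set b) = m - length b"
    using card_Diff_subset[OF finite_imageI[OF finite_set] sub] card_image[OF inj] distinct_card[OF db]
    by simp
  moreover have "({-int m..-1} - ?\<beta> ` set b) \<inter> int ` set a = {}" by auto
  ultimately show ?thesis unfolding maya_set_def
    using card_Un_disjoint[of "{-int m..-1} - ?\<beta> ` set b" "int ` set a"] card_image[of int "set a"]
      distinct_card[OF da] by simp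
qed

lemma card_maya_set_ge_nonneg:
  "card {x\<in>maya_set m a b. int d \<le> x} = card {y\<in>set a. d \<le> y}"
proof -
  have "{x\<in>maya_set m a b. int d \<le> x} = int ` {y\<in>set a. d \<le> y}" unfolding maya_set_def by auto
  thus ?thesis by (simp add: card_image)
qed

lemma card_maya_set_ge_neg:
  assumes da: "distinct a" and e: "e \<le> m"
  shows "card {x\<in>maya_set m a b. - int e \<le> x} + card {y\<in>set b. y < e} = e + length a"
proof -
  let ?\<beta> = "\<lambda>y::nat. - int y - 1"
  define A where "A = {- int e..-1} - ?\<beta> ` set b"
  have fin: "finite A" unfolding A_def by simp
  have "{x\<in>maya_set m a b. - int e \<le> x} = A \<union> int ` set a"
  proof (rule set_eqI)
    fix x
    have "x \<in> int ` set a \<Longrightarrow> 0 \<le> x" by auto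
    thus "x \<in> {x\<in>maya_set m a b. - int e \<le> x} \<longleftrightarrow> x \<in> A \<union> int ` set a"
      unfolding maya_set_def A_def mem_Collect_eq Un_iff Diff_iff atLeastAtMost_iff
      using e by linarith
  qed
  moreover have "A \<inter> int ` set a = {}" unfolding A_def by auto
  ultimately have "card {x\<in>maya_set m a b. - int e \<le> x} = card A + length a"
    using card_Un_disjoint[OF fin] card_image[of int "set a"] distinct_card[OF da] by simp
  moreover have "card A + card {y\<in>set b. y < e} = e"
  proof -
    have "{- int e..-1} = A \<union> ?\<beta> ` {y\<in>set b. y < e}"
    proof (rule set_eqI)
      fix x
      have "x \<in> ?\<beta> ` {y\<in>set b. y < e} \<longleftrightarrow> x \<in> ?\<beta> ` set b \<and> - int e \<le> x \<and> x \<le> -1" by auto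
      thus "x \<in> {- int e..-1} \<longleftrightarrow> x \<in> A \<union> ?\<beta> ` {y\<in>set b. y < e}"
        unfolding A_def Un_iff Diff_iff atLeastAtMost_iff by blast
    qed
    hence "e = card (A \<union> ?\<beta> ` {y\<in>set b. y < e})" by (metis card_atLeastAtMost_int diff_minus_eq_add
      minus_minus add.commute add_diff_cancel_right' nat_int)
    also have "\<dots> = card A + card (?\<beta> ` {y\<in>set b. y < e})"
      by (rule card_Un_disjoint) (auto simp: A_def)
    also have "card (?\<beta> ` {y\<in>set b. y < e}) = card {y\<in>set b. y < e}"
      by (rule card_image) (auto simp: inj_on_def)
    finally show ?thesis by simp
  qed
  ultimately show ?thesis by simp
qed

lemma mem_frobenius_diagram_iff_maya_count:
  assumes sa: "sorted_wrt (>) a" and sb: "sorted_wrt (>) b" and len: "length a = length b"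
    and bm: "\<forall>y\<in>set b. y < m"
  shows "(r < m \<and> r + 1 \<le> card {x\<in>maya_set m a b. int c - int r \<le> x})
    \<longleftrightarrow> (r,c) \<in> frobenius_diagram a b"
proof -
  have da: "distinct a" and db: "distinct b" using sa sb by (auto intro: sorted_decreasing_distinct)
  have leg_bound: "b!c + c < m" if "c < length a" for c
  proof -
    have "b!c + (c - 0) \<le> b!0" using sorted_decreasing_gap[OF sb, of 0 c] that len by simp
    moreover have "b!0 < m" using bm that len by (metis gr_implies_not0 neq0_conv nth_mem)
    ultimately show ?thesis by simp
  qed
  show ?thesis
  proof (cases "r \<le> c")
    case True
    hence "int c - int r = int (c - r)" by simp
    hence "card {x\<in>maya_set m a b. int c - int r \<le> x} = card {y\<in>set a. c - r \<le> y}"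
      by (simp only: card_maya_set_ge_nonneg)
    hence "r + 1 \<le> card {x\<in>maya_set m a b. int c - int r \<le> x} \<longleftrightarrow> r < length a \<and> c - r \<le> a!r"
      by (simp only: card_ge_sorted_decreasing_iff[OF sa])
    moreover have "r < length a \<Longrightarrow> r < m" using leg_bound[of r] by simp
    ultimately show ?thesis unfolding mem_frobenius_diagram using True by auto
  next
    case False
    hence cr: "c < r" by simp
    show ?thesis
    proof (cases "r < m")
      case False
      hence "\<not> (c < length a \<and> r - c \<le> b!c)" using leg_bound[of c] by auto
      thus ?thesis using False cr len unfolding mem_frobenius_diagram by auto
    next
      case True
      have "int c - int r = - int (r - c)" using cr by simp
      hence "card {x\<in>maya_set m a b. int c - int r \<le> x} + card {y\<in>set b. y < r - c} = (r - c) + length a"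
        using card_maya_set_ge_neg[OF da, of "r - c" m b] True by (simp only:)
      moreover have "card {y\<in>set b. y < r - c} + card {y\<in>set b. r - c \<le> y} = length b"
      proof -
        have "{y\<in>set b. y < r - c} \<union> {y\<in>set b. r - c \<le> y} = set b" by auto
        hence "length b = card ({y\<in>set b. y < r - c} \<union> {y\<in>set b. r - c \<le> y})"
          using distinct_card[OF db] by simp
        also have "\<dots> = card {y\<in>set b. y < r - c} + card {y\<in>set b. r - c \<le> y}"
          by (rule card_Un_disjoint) auto
        finally show ?thesis by simp
      qed
      ultimately have "r + 1 \<le> card {x\<in>maya_set m a b. int c - int r \<le> x}
          \<longleftrightarrow> c + 1 \<le> card {y\<in>set b. r - c \<le> y}"
        using len cr by linarith
      also have "\<dots> \<longleftrightarrow> c < length b \<and> r - c \<le> b!c" by (rule card_ge_sorted_decreasing_iff[OF sb])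
      finally show ?thesis unfolding mem_frobenius_diagram using True cr by auto
    qed
  qed
qed

lemma lam_tuple_maya_set:
  assumes sa: "sorted_wrt (>) a" and sb: "sorted_wrt (>) b" and len: "length a = length b"
    and bm: "\<forall>y\<in>set b. y < m"
  shows "lam_tuple (sorted_list_of_set (maya_set m a b)) = frob a b"
proof -
  let ?L = "sorted_list_of_set (maya_set m a b)"
  let ?M = "lam_parts ?L"
  have fin: "finite (maya_set m a b)" unfolding maya_set_def by simp
  have dL: "distinct ?L" by simp
  have sL: "set ?L = maya_set m a b" using fin by simp
  have "distinct a" "distinct b" using sa sb by (simp_all add: sorted_decreasing_distinct)
  hence lL: "length ?L = m" using card_maya_set[OF _ _ bm] distinct_length_le_bound[OF _ bm] len by simp
  note M = lam_parts_props[OF dL]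
  have part: "is_partition (filter (\<lambda>x. 0 < x) ?M)"
    unfolding is_partition_def using M(1) by (auto intro: sorted_wrt_filter)
  have "young_diagram (filter (\<lambda>x. 0 < x) ?M) = frobenius_diagram a b"
    unfolding young_diagram_filter_pos[OF M(1)]
    using M(2,3) mem_frobenius_diagram_iff_maya_count[OF assms] sL lL by auto
  hence "frob a b = Abs_partition (filter (\<lambda>x. 0 < x) ?M)"
    by (rule frob_eq_Abs_partition[OF part _ sa sb len])
  thus ?thesis by (simp add: lam_tuple_eq_lam_parts)
qed

section \<open>Pluecker relations indexed by sets\<close>

abbreviation sorted_list :: "int set \<Rightarrow> int list" where "sorted_list \<equiv> sorted_list_of_set"

lemma lam_tuple_sorted_set: "distinct L \<Longrightarrow> lam_tuple L = lam_tuple (sorted_list (set L))"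
proof -
  assume d: "distinct L"
  have e: "sorted_list (set L) = sort L" using d by (simp add: sorted_list_of_set_sort_remdups distinct_remdups_id)
  have "sort (sort L) = sort L" by (rule sorted_sort_id[OF sorted_sort])
  moreover have "length (sort L) = length L" by (rule length_sort)
  ultimately show ?thesis unfolding lam_tuple_def e by (simp only:)
qed

lemma sgn_tuple_sorted: "sorted_wrt (<) L \<Longrightarrow> sgn_tuple L = 1"
proof -
  assume s: "sorted_wrt (<) L"
  hence d: "distinct L" by (simp add: strict_sorted_iff)
  have E: "{(a, b). a < b \<and> b < length L \<and> L ! b < L ! a} = {}"
    using s by (auto simp: sorted_wrt_iff_nth_less dest: less_asym)
  show ?thesis unfolding sgn_tuple_def if_P[OF d] E by simp
qed

lemma sgn_tuple_snoc:
  assumes s: "sorted_wrt (<) (I::int list)" and x: "x \<notin> set I"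
  shows "sgn_tuple (I @ [x]) = (-1) ^ card {y\<in>set I. x < y}"
proof -
  let ?L = "I @ [x]" let ?n = "length I"
  have d: "distinct ?L" using s x by (simp add: strict_sorted_iff)
  have eq: "{(a, b). a < b \<and> b < length ?L \<and> ?L ! b < ?L ! a} = (\<lambda>a. (a, ?n)) ` {a. a < ?n \<and> x < I!a}"
  proof (rule set_eqI, rule iffI)
    fix z assume "z \<in> {(a, b). a < b \<and> b < length ?L \<and> ?L ! b < ?L ! a}"
    then obtain a b where z: "z = (a,b)" "a < b" "b < Suc ?n" "?L!b < ?L!a" by auto
    show "z \<in> (\<lambda>a. (a, ?n)) ` {a. a < ?n \<and> x < I!a}"
    proof (cases "b = ?n")
      case True thus ?thesis using z by (auto simp: nth_append)
    next
      case False
      hence "b < ?n" using z by simp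
      hence "I!a < I!b" using s z by (simp add: sorted_wrt_iff_nth_less)
      thus ?thesis using z \<open>b < ?n\<close> by (simp add: nth_append)
    qed
  next
    fix z assume "z \<in> (\<lambda>a. (a, ?n)) ` {a. a < ?n \<and> x < I!a}"
    thus "z \<in> {(a, b). a < b \<and> b < length ?L \<and> ?L ! b < ?L ! a}" by (auto simp: nth_append)
  qed
  have c1: "card ((\<lambda>a. (a, ?n)) ` {a. a < ?n \<and> x < I!a}) = card {a. a < ?n \<and> x < I!a}"
    by (rule card_image) (auto simp: inj_on_def)
  have dI: "distinct I" using s by (simp add: strict_sorted_iff)
  have "{y\<in>set I. x < y} = (\<lambda>a. I!a) ` {a. a < ?n \<and> x < I!a}" by (auto simp: in_set_conv_nth)
  moreover have "inj_on (\<lambda>a. I!a) {a. a < ?n \<and> x < I!a}" using dI by (auto simp: inj_on_def nth_eq_iff_index_eq)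
  ultimately have c2: "card {y\<in>set I. x < y} = card {a. a < ?n \<and> x < I!a}" by (simp add: card_image)
  show ?thesis unfolding sgn_tuple_def using d eq c1 c2 by simp
qed

lemma tpi_sorted: "sorted_wrt (<) L \<Longrightarrow> tpi L = pvar (lam_tuple (sorted_list (set L)))"
proof -
  assume s: "sorted_wrt (<) L"
  hence "distinct L" by (simp add: strict_sorted_iff)
  hence "lam_tuple L = lam_tuple (sorted_list (set L))" by (rule lam_tuple_sorted_set)
  thus ?thesis unfolding tpi_def sgn_tuple_sorted[OF s] by simp
qed

lemma tpi_snoc_sorted:
  assumes s: "sorted_wrt (<) I" and x: "x \<notin> set I"
  shows "tpi (I @ [x]) = (-1) ^ card {y\<in>set I. x < y} * pvar (lam_tuple (sorted_list (insert x (set I))))"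
proof -
  have "distinct (I @ [x])" using s x by (simp add: strict_sorted_iff)
  hence "lam_tuple (I @ [x]) = lam_tuple (sorted_list (insert x (set I)))"
    using lam_tuple_sorted_set by fastforce
  thus ?thesis unfolding tpi_def sgn_tuple_snoc[OF s x] by simp
qed

lemma tpi_snoc_mem: "x \<in> set I \<Longrightarrow> tpi (I @ [x]) = 0"
  by (simp add: tpi_def sgn_tuple_def)

lemma tpi_delete_sorted:
  assumes s: "sorted_wrt (<) J" and p: "p < length J"
  shows "tpi (take p J @ drop (Suc p) J) = pvar (lam_tuple (sorted_list (set J - {J!p})))"
  using tpi_sorted[OF sorted_wrt_delete_nth[OF s p]] set_delete_nth[OF _ p] s
  by (simp add: strict_sorted_iff)

lemma pluecker_sorted_sets:
  assumes fI: "finite SI" and fJ: "finite SJ"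
  shows "pluecker (sorted_list SI) (sorted_list SJ)
    = (\<Sum>x\<in>SJ - SI. (-1) ^ Suc (card {y\<in>SJ. y < x} + card {y\<in>SI. x < y})
        * pvar (lam_tuple (sorted_list (insert x SI))) * pvar (lam_tuple (sorted_list (SJ - {x}))))"
proof -
  let ?I = "sorted_list SI" let ?J = "sorted_list SJ" let ?n = "length ?J"
  have sI: "sorted_wrt (<) ?I" and sJ: "sorted_wrt (<) ?J" by simp_all
  have setI: "set ?I = SI" and setJ: "set ?J = SJ" using fI fJ by simp_all
  define h where "h x = (-1) ^ Suc (card {y\<in>SJ. y < x}) * tpi (?I @ [x])
    * pvar (lam_tuple (sorted_list (SJ - {x})))" for x
  have "pluecker ?I ?J = (\<Sum>p<?n. (-1) ^ Suc p * tpi (?I @ [?J ! p]) * tpi (take p ?J @ drop (Suc p) ?J))"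
    unfolding pluecker_def One_nat_def sum.atLeast1_atMost_eq by (simp only: diff_Suc_Suc diff_zero)
  also have "\<dots> = (\<Sum>p<?n. h (?J ! p))"
    using tpi_delete_sorted[OF sJ] card_less_sorted[OF sJ] setJ by (intro sum.cong) (simp_all add: h_def)
  also have "\<dots> = (\<Sum>x\<in>SJ. h x)"
  proof -
    have "inj_on ((!) ?J) {..<?n}" by (simp add: inj_on_nth)
    thus ?thesis using sum.reindex[of "(!) ?J" "{..<?n}" h] image_nth_lessThan[of ?J] setJ by simp
  qed
  also have "\<dots> = (\<Sum>x\<in>SJ - SI. h x)"
    by (rule sum.mono_neutral_right[OF fJ]) (auto simp: h_def tpi_snoc_mem setI)
  also have "\<dots> = (\<Sum>x\<in>SJ - SI. (-1) ^ Suc (card {y\<in>SJ. y < x} + card {y\<in>SI. x < y})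
        * pvar (lam_tuple (sorted_list (insert x SI))) * pvar (lam_tuple (sorted_list (SJ - {x}))))"
    using tpi_snoc_sorted[OF sI] setI by (intro sum.cong) (simp_all add: h_def power_add)
  finally show ?thesis .
qed

lemma card_inversions_split:
  fixes SI SJ :: "int set"
  assumes fI: "finite SI" and fJ: "finite SJ" and x: "x \<in> SJ - SI"
  shows "card {y\<in>SJ. y < x} + card {y\<in>SI. x < y}
    = card (SI \<inter> SJ) + card {y\<in>SJ - SI. y < x} + card {y\<in>SI - SJ. x < y}"
proof -
  let ?C = "SI \<inter> SJ"
  have below: "card {y\<in>SJ. y < x} = card {y\<in>?C. y < x} + card {y\<in>SJ - SI. y < x}"
  proof -
    have "{y\<in>SJ. y < x} = {y\<in>?C. y < x} \<union> {y\<in>SJ - SI. y < x}" by auto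
    moreover have "card ({y\<in>?C. y < x} \<union> {y\<in>SJ - SI. y < x})
        = card {y\<in>?C. y < x} + card {y\<in>SJ - SI. y < x}"
      by (rule card_Un_disjoint) (use fJ fI in auto)
    ultimately show ?thesis by simp
  qed
  have above: "card {y\<in>SI. x < y} = card {y\<in>?C. x < y} + card {y\<in>SI - SJ. x < y}"
  proof -
    have "{y\<in>SI. x < y} = {y\<in>?C. x < y} \<union> {y\<in>SI - SJ. x < y}" by auto
    moreover have "card ({y\<in>?C. x < y} \<union> {y\<in>SI - SJ. x < y})
        = card {y\<in>?C. x < y} + card {y\<in>SI - SJ. x < y}"
      by (rule card_Un_disjoint) (use fJ fI in auto)
    ultimately show ?thesis by simp
  qed
  have common: "card {y\<in>?C. y < x} + card {y\<in>?C. x < y} = card ?C"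
  proof -
    have "y < x \<or> x < y" if "y \<in> ?C" for y
    proof -
      have "y \<noteq> x" using x that by auto
      thus ?thesis by (rule linorder_neqE) auto
    qed
    hence "?C = {y\<in>?C. y < x} \<union> {y\<in>?C. x < y}" by blast
    hence "card ?C = card ({y\<in>?C. y < x} \<union> {y\<in>?C. x < y})" by (rule arg_cong)
    also have "\<dots> = card {y\<in>?C. y < x} + card {y\<in>?C. x < y}"
      using fI by (intro card_Un_disjoint) auto
    finally show ?thesis by simp
  qed
  show ?thesis using below above common by simp
qed

lemma pluecker_sets_in_ideal:
  assumes fI: "finite SI" and fJ: "finite SJ" and m: "0 < m" "m < N"
    and cI: "card SI = m - 1" and cJ: "card SJ = m + 1"
    and bI: "SI \<subseteq> {- int m .. int N - int m - 1}" and bJ: "SJ \<subseteq> {- int m .. int N - int m - 1}"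
  shows "pluecker (sorted_list SI) (sorted_list SJ) \<in> plueckerIdeal"
  unfolding plueckerIdeal_def
proof (rule ideal_gen.gen)
  show "pluecker (sorted_list SI) (sorted_list SJ) \<in> pluecker_gens" unfolding pluecker_gens_def
    using fI fJ m cI cJ bI bJ
    by (intro CollectI exI[of _ "sorted_list SI"] exI[of _ "sorted_list SJ"] exI[of _ m] exI[of _ N]) auto
qed

section \<open>Expansion relations\<close>

lemma P_eq_maya_set:
  assumes "sorted_wrt (>) a" "sorted_wrt (>) b" "length a = length b" "\<forall>y\<in>set b. y < m"
  shows "P a b = pvar (lam_tuple (sorted_list (maya_set m a b)))"
  using lam_tuple_maya_set[OF assms] by simp

lemma maya_set_expansion_signs:
  fixes a b :: "nat list"
  assumes sa: "sorted_wrt (>) a" and sb: "sorted_wrt (>) b" and len: "length a = length b"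
    and ne: "b \<noteq> []" and bm: "\<forall>y\<in>set b. y < m"
  defines "SI \<equiv> maya_set m (butlast a) b" and "SJ \<equiv> maya_set m [last a] []"
  shows "SJ - SI = insert (int (last a)) ((\<lambda>y. - int y - 1) ` set b)"
    and "card {y\<in>SJ. y < int (last a)} + card {y\<in>SI. int (last a) < y}
      = (m - length b) + length b + (length b - 1)"
    and "l < length b \<Longrightarrow> card {y\<in>SJ. y < - int (b!l) - 1} + card {y\<in>SI. - int (b!l) - 1 < y}
      = (m - length b) + l + (length b - 1)"
proof -
  define \<beta> where "\<beta> y = - int y - 1" for y :: nat
  have nea: "a \<noteq> []" using ne len by auto
  note butlast = sorted_decreasing_butlast[OF sa nea]
  have db: "distinct b" and dba: "distinct (butlast a)"
    using sb butlast(1) by (simp_all add: sorted_decreasing_distinct)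
  have fin: "finite SI" "finite SJ" unfolding SI_def SJ_def maya_set_def by auto
  show JmI: "SJ - SI = insert (int (last a)) (\<beta> ` set b)"
    unfolding SI_def SJ_def maya_set_def \<beta>_def using bm butlast(2) by force
  have ImJ: "SI - SJ = int ` set (butlast a)"
    unfolding SI_def SJ_def maya_set_def using butlast(2) by auto
  have common: "card (SI \<inter> SJ) = m - length b"
  proof -
    have "SI \<inter> SJ = maya_set m [] b" unfolding SI_def SJ_def maya_set_def using butlast(2) by auto
    thus ?thesis using card_maya_set[OF _ db bm] by simp
  qed
  have above: "card {y\<in>SI - SJ. x < y} = length b - 1" if "x \<in> SJ - SI" for x
  proof -
    have "{y\<in>SI - SJ. x < y} = int ` set (butlast a)"
      using that butlast(2) unfolding ImJ JmI by (auto simp: \<beta>_def)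
    thus ?thesis using distinct_card[OF dba] len by (simp add: card_image)
  qed
  have "card {y\<in>SJ - SI. y < int (last a)} = length b"
  proof -
    have "{y\<in>SJ - SI. y < int (last a)} = \<beta> ` set b" unfolding JmI by (auto simp: \<beta>_def)
    thus ?thesis using distinct_card[OF db] by (simp add: card_image inj_on_def \<beta>_def)
  qed
  thus "card {y\<in>SJ. y < int (last a)} + card {y\<in>SI. int (last a) < y}
      = (m - length b) + length b + (length b - 1)"
    using card_inversions_split[OF fin, of "int (last a)"] JmI common above by simp
  assume l: "l < length b"
  have "sorted_wrt (<) (map \<beta> b)"
    unfolding sorted_wrt_map \<beta>_def by (rule sorted_wrt_mono_rel[OF _ sb]) simp
  hence "card {y\<in>set (map \<beta> b). y < map \<beta> b ! l} = l" using l by (intro card_less_sorted) simp_all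
  moreover have "{y\<in>SJ - SI. y < \<beta> (b!l)} = {y\<in>set (map \<beta> b). y < map \<beta> b ! l}"
    unfolding JmI using l by (auto simp: \<beta>_def)
  ultimately have "card {y\<in>SJ - SI. y < \<beta> (b!l)} = l" by simp
  thus "card {y\<in>SJ. y < - int (b!l) - 1} + card {y\<in>SI. - int (b!l) - 1 < y}
      = (m - length b) + l + (length b - 1)"
    using card_inversions_split[OF fin, of "\<beta> (b!l)"] JmI common above l by (simp add: \<beta>_def)
qed

lemma maya_set_expansion_terms:
  fixes a b :: "nat list"
  assumes sa: "sorted_wrt (>) a" and sb: "sorted_wrt (>) b" and len: "length a = length b"
    and ne: "b \<noteq> []" and bm: "\<forall>y\<in>set b. y < m"
  defines "SI \<equiv> maya_set m (butlast a) b" and "SJ \<equiv> maya_set m [last a] []"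
  shows "pvar (lam_tuple (sorted_list (insert (int (last a)) SI))) = P a b"
    and "pvar (lam_tuple (sorted_list (SJ - {int (last a)}))) = P [] []"
    and "l < length b \<Longrightarrow> pvar (lam_tuple (sorted_list (insert (- int (b!l) - 1) SI)))
      = P (butlast a) (take l b @ drop (Suc l) b)"
    and "l < length b \<Longrightarrow> pvar (lam_tuple (sorted_list (SJ - {- int (b!l) - 1}))) = P [last a] [b!l]"
proof -
  have nea: "a \<noteq> []" using ne len by auto
  note butlast = sorted_decreasing_butlast[OF sa nea]
  have "insert (int (last a)) SI = maya_set m a b" "SJ - {int (last a)} = maya_set m [] []"
    unfolding SI_def SJ_def maya_set_def butlast(3) using butlast(2) by auto
  thus "pvar (lam_tuple (sorted_list (insert (int (last a)) SI))) = P a b"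
    "pvar (lam_tuple (sorted_list (SJ - {int (last a)}))) = P [] []"
    using P_eq_maya_set[OF sa sb len bm] P_eq_maya_set[of "[]" "[]" m] by simp_all
  assume l: "l < length b"
  define b' where "b' = take l b @ drop (Suc l) b"
  have "sorted_wrt (>) b'" unfolding b'_def by (rule sorted_wrt_delete_nth[OF sb l])
  moreover have set_b': "set b' = set b - {b!l}"
    unfolding b'_def using set_delete_nth[OF _ l] sb by (simp add: sorted_decreasing_distinct)
  moreover have "length b' = length (butlast a)" unfolding b'_def using l len by simp
  ultimately have "P (butlast a) b' = pvar (lam_tuple (sorted_list (maya_set m (butlast a) b')))"
    using P_eq_maya_set[OF butlast(1)] bm by simp
  moreover have "insert (- int (b!l) - 1) SI = maya_set m (butlast a) b'"
    unfolding SI_def maya_set_def set_b' using l bm by (auto simp: image_iff)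
  ultimately show "pvar (lam_tuple (sorted_list (insert (- int (b!l) - 1) SI)))
      = P (butlast a) (take l b @ drop (Suc l) b)" unfolding b'_def by simp
  have "SJ - {- int (b!l) - 1} = maya_set m [last a] [b!l]" unfolding SJ_def maya_set_def by auto
  thus "pvar (lam_tuple (sorted_list (SJ - {- int (b!l) - 1}))) = P [last a] [b!l]"
    using P_eq_maya_set[of "[last a]" "[b!l]" m] bm l by simp
qed

lemma pluecker_maya_set_expansion:
  fixes a b :: "nat list"
  assumes sa: "sorted_wrt (>) a" and sb: "sorted_wrt (>) b" and len: "length a = length b"
    and ne: "b \<noteq> []" and bm: "\<forall>y\<in>set b. y < m"
  shows "(-1) ^ (m - length b)
      * pluecker (sorted_list (maya_set m (butlast a) b)) (sorted_list (maya_set m [last a] []))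
    = P [] [] * P a b + (\<Sum>l<length b. (-1) ^ (l + length b)
        * P (butlast a) (take l b @ drop (Suc l) b) * P [last a] [b!l])"
proof -
  define n where "n = length b"
  define \<beta> where "\<beta> y = - int y - 1" for y :: nat
  define SI where "SI = maya_set m (butlast a) b"
  define SJ where "SJ = maya_set m [last a] []"
  note signs = maya_set_expansion_signs[OF assms, folded SI_def SJ_def n_def \<beta>_def]
  note terms = maya_set_expansion_terms[OF assms, folded SI_def SJ_def n_def \<beta>_def]
  define T where "T x = (-1) ^ Suc (card {y\<in>SJ. y < x} + card {y\<in>SI. x < y})
      * pvar (lam_tuple (sorted_list (insert x SI))) * pvar (lam_tuple (sorted_list (SJ - {x})))" for x
  have n_pos: "0 < n" using ne n_def by simp
  have "pluecker (sorted_list SI) (sorted_list SJ) = (\<Sum>x\<in>SJ - SI. T x)"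
    unfolding T_def by (rule pluecker_sorted_sets) (simp_all add: SI_def SJ_def maya_set_def)
  also have "\<dots> = T (int (last a)) + (\<Sum>l<n. T (\<beta> (b!l)))"
  proof -
    have "int (last a) \<notin> \<beta> ` set b" by (auto simp: \<beta>_def)
    moreover have "inj_on (\<lambda>l. \<beta> (b!l)) {..<n}" using sb n_def
      by (auto simp: inj_on_def \<beta>_def nth_eq_iff_index_eq sorted_decreasing_distinct)
    moreover have "(\<lambda>l. \<beta> (b!l)) ` {..<n} = \<beta> ` set b"
      using image_nth_lessThan[of b] n_def by (metis image_image)
    ultimately show ?thesis unfolding signs(1)
      by (simp add: sum.reindex[symmetric, of "\<lambda>l. \<beta> (b!l)", unfolded comp_def] image_image)
  qed
  also have "T (int (last a)) = (-1) ^ (m - n) * (P [] [] * P a b)"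
    unfolding T_def signs(2) terms(1,2) using n_pos by (simp add: power_add mult.commute)
  also have "(\<Sum>l<n. T (\<beta> (b!l))) = (-1) ^ (m - n) * (\<Sum>l<n. (-1) ^ (l + n)
        * P (butlast a) (take l b @ drop (Suc l) b) * P [last a] [b!l])"
    unfolding sum_distrib_left
    by (rule sum.cong) (use n_pos in \<open>simp_all add: T_def signs(3) terms(3,4) power_add\<close>)
  finally show ?thesis unfolding SI_def SJ_def n_def
    by (simp add: algebra_simps flip: power_add)
qed

lemma frobenius_expansion_in_ideal:
  fixes a b :: "nat list"
  assumes sa: "sorted_wrt (>) a" and sb: "sorted_wrt (>) b" and len: "length a = length b"
    and ne: "b \<noteq> []"
  shows "P [] [] * P a b + (\<Sum>l<length b. (-1) ^ (l + length b)
    * P (butlast a) (take l b @ drop (Suc l) b) * P [last a] [b!l]) \<in> plueckerIdeal"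
proof -
  define m where "m = hd b + 1"
  define N where "N = m + hd a + 1"
  define SI where "SI = maya_set m (butlast a) b"
  define SJ where "SJ = maya_set m [last a] []"
  have nea: "a \<noteq> []" using ne len by auto
  have da: "distinct a" and db: "distinct b" using sa sb by (auto intro: sorted_decreasing_distinct)
  have le_hd: "\<forall>y\<in>set xs. y \<le> hd xs" if "sorted_wrt (>) xs" for xs :: "nat list"
    using that by (cases xs) auto
  have bm: "\<forall>y\<in>set b. y < m" using le_hd[OF sb] m_def by auto
  have "length b \<le> m" by (rule distinct_length_le_bound[OF db bm])
  moreover have "length b \<ge> 1" using ne by (simp add: Suc_le_eq)
  moreover have "distinct (butlast a)" using da by (simp add: distinct_butlast)
  ultimately have cards: "card SI = m - 1" "card SJ = m + 1"
    unfolding SI_def SJ_def using card_maya_set[OF _ db bm] card_maya_set[of "[last a]" "[]" m]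
      len by simp_all
  have "set (butlast a) \<subseteq> set a" "last a \<in> set a" using nea by (auto dest: in_set_butlastD)
  hence bounds: "SI \<subseteq> {- int m .. int N - int m - 1}" "SJ \<subseteq> {- int m .. int N - int m - 1}"
    unfolding SI_def SJ_def maya_set_def N_def using le_hd[OF sa] by force+
  have "pluecker (sorted_list SI) (sorted_list SJ) \<in> plueckerIdeal"
    by (rule pluecker_sets_in_ideal[OF _ _ _ _ cards bounds]) (auto simp: SI_def SJ_def maya_set_def m_def N_def)
  hence "(-1) ^ (m - length b) * pluecker (sorted_list SI) (sorted_list SJ) \<in> plueckerIdeal"
    unfolding plueckerIdeal_def by (rule ideal_gen.mult)
  thus ?thesis
    unfolding SI_def SJ_def pluecker_maya_set_expansion[OF sa sb len ne bm] .
qed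

definition rank_two_relation :: "nat \<Rightarrow> nat \<Rightarrow> nat \<Rightarrow> nat \<Rightarrow> S" where
  "rank_two_relation a1 a2 b1 b2 =
     P [] [] * P [a1,a2] [b1,b2] - P [a1] [b1] * P [a2] [b2] + P [a1] [b2] * P [a2] [b1]"

definition rank_three_relation :: "nat \<Rightarrow> nat \<Rightarrow> nat \<Rightarrow> nat \<Rightarrow> nat \<Rightarrow> nat \<Rightarrow> S" where
  "rank_three_relation a1 a2 a3 b1 b2 b3 =
     P [] [] * P [a1,a2,a3] [b1,b2,b3] - P [a1,a2] [b2,b3] * P [a3] [b1]
       + P [a1,a2] [b1,b3] * P [a3] [b2] - P [a1,a2] [b1,b2] * P [a3] [b3]"

lemma rank_two_relation_in_ideal:
  "a2 < a1 \<Longrightarrow> b2 < b1 \<Longrightarrow> rank_two_relation a1 a2 b1 b2 \<in> plueckerIdeal"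
  using frobenius_expansion_in_ideal[of "[a1,a2]" "[b1,b2]"]
  by (simp add: rank_two_relation_def lessThan_nat_numeral algebra_simps)

lemma rank_three_relation_in_ideal:
  "a3 < a2 \<Longrightarrow> a2 < a1 \<Longrightarrow> b3 < b2 \<Longrightarrow> b2 < b1
    \<Longrightarrow> rank_three_relation a1 a2 a3 b1 b2 b3 \<in> plueckerIdeal"
  using frobenius_expansion_in_ideal[of "[a1,a2,a3]" "[b1,b2,b3]"]
  by (simp add: rank_three_relation_def lessThan_nat_numeral algebra_simps)

lemma ideal_gen_diff: "x \<in> ideal_gen G \<Longrightarrow> y \<in> ideal_gen G \<Longrightarrow> x - y \<in> ideal_gen G"
  using ideal_gen.add[OF _ ideal_gen.mult[of y G "-1"]] by simp

lemma kappa_relations_in_ideal: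
  fixes i j k :: nat
  assumes "i < j" and "j < k"
  shows "P [] [] * (P [i] [i] * P [k,j] [k,j] + P [j] [k] * P [k,i] [j,i])
      - P [i] [i] * P [j] [j] * P [k] [k] + P [i] [j] * P [j] [k] * P [k] [i]
      \<in> plueckerIdeal"
    and "P [] [] * (P [j] [j] * P [k,i] [k,i] - P [k] [i] * P [j,i] [k,j])
      - P [i] [i] * P [j] [j] * P [k] [k] + P [i] [j] * P [j] [k] * P [k] [i]
      \<in> plueckerIdeal"
    and "P [] [] * (P [k] [k] * P [j,i] [j,i] + P [i] [j] * P [k,j] [k,i])
      - P [i] [i] * P [j] [j] * P [k] [k] + P [i] [j] * P [j] [k] * P [k] [i]
      \<in> plueckerIdeal"
proof -
  have rel: "rank_two_relation a1 a2 b1 b2 \<in> ideal_gen pluecker_gens"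
    if "a2 < a1" "b2 < b1" for a1 a2 b1 b2
    using rank_two_relation_in_ideal[OF that] unfolding plueckerIdeal_def .
  show "P [] [] * (P [i] [i] * P [k,j] [k,j] + P [j] [k] * P [k,i] [j,i])
      - P [i] [i] * P [j] [j] * P [k] [k] + P [i] [j] * P [j] [k] * P [k] [i]
    \<in> plueckerIdeal" (is "?\<kappa> \<in> _")
  proof -
    have "?\<kappa> = P [i] [i] * rank_two_relation k j k j + P [j] [k] * rank_two_relation k i j i"
      by (simp add: rank_two_relation_def algebra_simps)
    thus ?thesis
      using assms unfolding plueckerIdeal_def by (simp add: rel ideal_gen.add ideal_gen.mult ideal_gen_diff)
  qed
  show "P [] [] * (P [j] [j] * P [k,i] [k,i] - P [k] [i] * P [j,i] [k,j])
      - P [i] [i] * P [j] [j] * P [k] [k] + P [i] [j] * P [j] [k] * P [k] [i]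
    \<in> plueckerIdeal" (is "?\<kappa> \<in> _")
  proof -
    have "?\<kappa> = P [j] [j] * rank_two_relation k i k i - P [k] [i] * rank_two_relation j i k j"
      by (simp add: rank_two_relation_def algebra_simps)
    thus ?thesis
      using assms unfolding plueckerIdeal_def by (simp add: rel ideal_gen.add ideal_gen.mult ideal_gen_diff)
  qed
  show "P [] [] * (P [k] [k] * P [j,i] [j,i] + P [i] [j] * P [k,j] [k,i])
      - P [i] [i] * P [j] [j] * P [k] [k] + P [i] [j] * P [j] [k] * P [k] [i]
    \<in> plueckerIdeal" (is "?\<kappa> \<in> _")
  proof -
    have "?\<kappa> = P [k] [k] * rank_two_relation j i j i + P [i] [j] * rank_two_relation k j k i"
      by (simp add: rank_two_relation_def algebra_simps)
    thus ?thesis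
      using assms unfolding plueckerIdeal_def by (simp add: rel ideal_gen.add ideal_gen.mult ideal_gen_diff)
  qed
qed

lemma kappa_transposed_relations_in_ideal:
  fixes i j k :: nat
  assumes "i < j" and "j < k"
  shows "P [] [] * (P [i] [i] * P [k,j] [k,j] + P [k] [j] * P [j,i] [k,i])
      - P [i] [i] * P [j] [j] * P [k] [k] + P [j] [i] * P [k] [j] * P [i] [k]
      \<in> plueckerIdeal"
    and "P [] [] * (P [j] [j] * P [k,i] [k,i] - P [i] [k] * P [k,j] [j,i])
      - P [i] [i] * P [j] [j] * P [k] [k] + P [j] [i] * P [k] [j] * P [i] [k]
      \<in> plueckerIdeal"
    and "P [] [] * (P [k] [k] * P [j,i] [j,i] + P [j] [i] * P [k,i] [k,j])
      - P [i] [i] * P [j] [j] * P [k] [k] + P [j] [i] * P [k] [j] * P [i] [k]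
      \<in> plueckerIdeal"
proof -
  have rel: "rank_two_relation a1 a2 b1 b2 \<in> ideal_gen pluecker_gens"
    if "a2 < a1" "b2 < b1" for a1 a2 b1 b2
    using rank_two_relation_in_ideal[OF that] unfolding plueckerIdeal_def .
  show "P [] [] * (P [i] [i] * P [k,j] [k,j] + P [k] [j] * P [j,i] [k,i])
      - P [i] [i] * P [j] [j] * P [k] [k] + P [j] [i] * P [k] [j] * P [i] [k]
    \<in> plueckerIdeal" (is "?\<kappa> \<in> _")
  proof -
    have "?\<kappa> = P [i] [i] * rank_two_relation k j k j + P [k] [j] * rank_two_relation j i k i"
      by (simp add: rank_two_relation_def algebra_simps)
    thus ?thesis
      using assms unfolding plueckerIdeal_def by (simp add: rel ideal_gen.add ideal_gen.mult ideal_gen_diff)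
  qed
  show "P [] [] * (P [j] [j] * P [k,i] [k,i] - P [i] [k] * P [k,j] [j,i])
      - P [i] [i] * P [j] [j] * P [k] [k] + P [j] [i] * P [k] [j] * P [i] [k]
    \<in> plueckerIdeal" (is "?\<kappa> \<in> _")
  proof -
    have "?\<kappa> = P [j] [j] * rank_two_relation k i k i - P [i] [k] * rank_two_relation k j j i"
      by (simp add: rank_two_relation_def algebra_simps)
    thus ?thesis
      using assms unfolding plueckerIdeal_def by (simp add: rel ideal_gen.add ideal_gen.mult ideal_gen_diff)
  qed
  show "P [] [] * (P [k] [k] * P [j,i] [j,i] + P [j] [i] * P [k,i] [k,j])
      - P [i] [i] * P [j] [j] * P [k] [k] + P [j] [i] * P [k] [j] * P [i] [k]
    \<in> plueckerIdeal" (is "?\<kappa> \<in> _")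
  proof -
    have "?\<kappa> = P [k] [k] * rank_two_relation j i j i + P [j] [i] * rank_two_relation k i k j"
      by (simp add: rank_two_relation_def algebra_simps)
    thus ?thesis
      using assms unfolding plueckerIdeal_def by (simp add: rel ideal_gen.add ideal_gen.mult ideal_gen_diff)
  qed
qed

(* Each factor pi_(i|i) pi_(j|j) - pi_0 pi_(j,i|j,i) of the triple product equals
   pi_(i|j) pi_(j|i) minus a rank-two relation; this is how the cubic term is absorbed. *)
lemma kappa_zero_in_ideal:
  fixes i j k :: nat
  assumes "i < j" and "j < k"
  shows "P [] [] ^ 2 * P [k,j,i] [k,j,i] * (P [i] [j] * P [j] [k] * P [k] [i])
      - (P [i] [j] * P [j] [k] * P [k] [i]) ^ 2
      + P [i] [j] * P [j] [k] * P [k] [i] * (2 * (P [i] [i] * P [j] [j] * P [k] [k])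
          - P [] [] * (P [i] [i] * P [k,j] [k,j] + P [j] [j] * P [k,i] [k,i] + P [k] [k] * P [j,i] [j,i]))
      - (P [i] [i] * P [j] [j] - P [] [] * P [j,i] [j,i])
        * (P [i] [i] * P [k] [k] - P [] [] * P [k,i] [k,i])
        * (P [j] [j] * P [k] [k] - P [] [] * P [k,j] [k,j])
    \<in> plueckerIdeal" (is "?\<kappa> \<in> _")
proof -
  define g where "g = rank_two_relation"
  define X where "X = P [i] [j] * P [j] [k] * P [k] [i]"
  define u where "u = P [i] [j] * P [j] [i]"
  define v where "v = P [i] [k] * P [k] [i]"
  define w where "w = P [j] [k] * P [k] [j]"
  have "?\<kappa> = P [] [] * X * rank_three_relation k j i k j i + X * P [i] [k] * g k j j i
        - X * P [i] [j] * g k j k i - X * P [j] [j] * g k i k i - X * P [k] [k] * g j i j i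
        + (v - g k i k i) * (w - g k j k j) * g j i j i + u * (w - g k j k j) * g k i k i
        + u * v * g k j k j"
    unfolding g_def X_def u_def v_def w_def rank_two_relation_def rank_three_relation_def
    by (simp add: algebra_simps power2_eq_square)
  moreover have "rank_three_relation k j i k j i \<in> plueckerIdeal"
    using assms by (intro rank_three_relation_in_ideal)
  moreover have "g a1 a2 b1 b2 \<in> plueckerIdeal" if "a2 < a1" "b2 < b1" for a1 a2 b1 b2
    unfolding g_def using that by (rule rank_two_relation_in_ideal)
  ultimately show ?thesis
    using assms unfolding plueckerIdeal_def by (simp add: ideal_gen.add ideal_gen.mult ideal_gen_diff)
qed

theorem mainTheorem9:
  fixes i j k :: nat
  assumes "i < j" and "j < k"
  defines "E \<equiv> P [] []"
  defines "X \<equiv> P [i] [j] * P [j] [k] * P [k] [i]"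
  defines "D \<equiv> P [i] [i] * P [j] [j] * P [k] [k]"
  shows
   "E * (P [i] [i] * P [k,j] [k,j] + P [j] [k] * P [k,i] [j,i]) - D + X \<in> plueckerIdeal \<and>
    E * (P [j] [j] * P [k,i] [k,i] - P [k] [i] * P [j,i] [k,j]) - D + X \<in> plueckerIdeal \<and>
    E * (P [k] [k] * P [j,i] [j,i] + P [i] [j] * P [k,j] [k,i]) - D + X \<in> plueckerIdeal \<and>
    E * (P [i] [i] * P [k,j] [k,j] + P [k] [j] * P [j,i] [k,i]) - D
      + P [j] [i] * P [k] [j] * P [i] [k] \<in> plueckerIdeal \<and>
    E * (P [j] [j] * P [k,i] [k,i] - P [i] [k] * P [k,j] [j,i]) - D
      + P [j] [i] * P [k] [j] * P [i] [k] \<in> plueckerIdeal \<and>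
    E * (P [k] [k] * P [j,i] [j,i] + P [j] [i] * P [k,i] [k,j]) - D
      + P [j] [i] * P [k] [j] * P [i] [k] \<in> plueckerIdeal \<and>
    E ^ 2 * P [k,j,i] [k,j,i] * X - X ^ 2
      + X * (2 * D - E * (P [i] [i] * P [k,j] [k,j] + P [j] [j] * P [k,i] [k,i]
                          + P [k] [k] * P [j,i] [j,i]))
      - (P [i] [i] * P [j] [j] - E * P [j,i] [j,i])
        * (P [i] [i] * P [k] [k] - E * P [k,i] [k,i])
        * (P [j] [j] * P [k] [k] - E * P [k,j] [k,j]) \<in> plueckerIdeal"
  unfolding E_def X_def D_def
  by (intro conjI kappa_relations_in_ideal[OF assms(1,2)] kappa_transposed_relations_in_ideal[OF assms(1,2)]
      kappa_zero_in_ideal[OF assms(1,2)])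

end
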